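(* Let $N\ge 1$ and let $J$ be a persymmetric Jacobi matrix of order $N+1$ that realizes perfect state transfer, with eigenvalues $\lambda_0<\lambda_1<\dots<\lambda_N$ satisfying \[\lambda_1-\lambda_0=\lambda_2-\lambda_1=\dots=\lambda_N-\lambda_{N-1}.\] Then $J$ does not have Early State Exclusion: if $T_0$ is the earliest positive time at which $J$ realizes perfect state transfer, there is no $t\in(0,T_0)$ with $(e^{-iJt}\mathbf{e}_0,\mathbf{e}_0)_{\mathbb{C}^{N+1}}=0$.
   Context: A Jacobi matrix of order $N+1$ is a real symmetric tridiagonal $(N+1)\times(N+1)$ matrix $J$ with diagonal entries $a_0,\dots,a_N\in\mathbb{R}$ and off-diagonal entries $b_0,\dots,b_{N-1}>0$. It is persymmetric if $a_k=a_{N-k}$ for $k=0,\dots,N$ and $b_l=b_{N-1-l}$ for $l=0,\dots,N-1$. Let $\mathbf{e}_0,\dots,\mathbf{e}_N$ be the standard basis of $\mathbb{C}^{N+1}$. $J$ realizes perfect state transfer (PST) at time $T>0$ if $e^{-iTJ}\mathbf{e}_0=e^{i\phi}\mathbf{e}_N$ for some $\phi\in\mathbb{R}$. If $T_0$ is the earliest (smallest positive) such time, $J$ is said to have Early State Exclusion (ESE) at time $t$ if $0<t<T_0$ and $(e^{-iJt}\mathbf{e}_0,\mathbf{e}_0)_{\mathbb{C}^{N+1}}=0$. *)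

theory Defs
  imports Complex_Main "Jordan_Normal_Form.Char_Poly" "Jordan_Normal_Form.Conjugate"
begin

definition jacobi_matrix :: "nat \<Rightarrow> real mat \<Rightarrow> bool" where
  "jacobi_matrix N J \<longleftrightarrow>
     J \<in> carrier_mat (N+1) (N+1) \<and>
     (\<forall>i\<le>N. \<forall>j\<le>N. J $$ (i,j) = J $$ (j,i)) \<and>
     (\<forall>i\<le>N. \<forall>j\<le>N. j \<noteq> i \<and> j \<noteq> Suc i \<and> i \<noteq> Suc j \<longrightarrow> J $$ (i,j) = 0) \<and>
     (\<forall>l<N. J $$ (l, Suc l) > 0)"

definition persymmetric :: "nat \<Rightarrow> real mat \<Rightarrow> bool" where
  "persymmetric N J \<longleftrightarrow>
     (\<forall>k\<le>N. J $$ (k,k) = J $$ (N-k, N-k)) \<and>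
     (\<forall>l<N. J $$ (l, Suc l) = J $$ (N-1-l, N-l))"

definition evol :: "nat \<Rightarrow> real mat \<Rightarrow> real \<Rightarrow> complex vec" where
  "evol N J t = vec (N+1) (\<lambda>j. \<Sum>k. ((- \<i> * complex_of_real t) ^ k / fact k) *
        ((map_mat complex_of_real J) ^\<^sub>m k) $$ (j, 0))"

definition PST_at :: "nat \<Rightarrow> real mat \<Rightarrow> real \<Rightarrow> bool" where
  "PST_at N J T \<longleftrightarrow> T > 0 \<and>
     (\<exists>\<phi>::real. evol N J T = exp (\<i> * complex_of_real \<phi>) \<cdot>\<^sub>v unit_vec (N+1) N)"

definition earliest_PST :: "nat \<Rightarrow> real mat \<Rightarrow> real \<Rightarrow> bool" where
  "earliest_PST N J T0 \<longleftrightarrow> PST_at N J T0 \<and> (\<forall>T. PST_at N J T \<longrightarrow> T0 \<le> T)"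

definition ESE_at :: "nat \<Rightarrow> real mat \<Rightarrow> real \<Rightarrow> bool" where
  "ESE_at N J t \<longleftrightarrow> (\<exists>T0. earliest_PST N J T0 \<and> 0 < t \<and> t < T0) \<and>
     evol N J t \<bullet>c unit_vec (N+1) 0 = 0"

end

(*
  Persymmetry and the three-term recurrence give |u_k(N)| = 1 for the eigenvectors normalised
  by u_k(0) = 1. Since (J^m)_{N,0} = 0 for m < N, the signed spectral weights w_k u_k(N) of e_0
  have vanishing moments of order < N, which forces w_k to be proportional to
  1 / prod_{j<>k} |lambda_k - lambda_j|, i.e. to binomial(N,k) when lambda_k = lambda_0 + k d.
  Hence (e^{-itJ} e_0, e_0) = c e^{-it lambda_0} (1 + e^{-itd})^N, which vanishes iff
  e^{-itd} = -1. PST at some time therefore forces e^{-iTd} = -1, and as e^{-itJ} e_0 depends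
  on t only through e^{-it lambda_0} and e^{-itd}, PST also holds at pi/d. So T_0 <= pi/d,
  and no t in (0, T_0) has e^{-itd} = -1.
*)
theory Submission
  imports Defs
begin

section \<open>Matrices and the eigenvalue equation\<close>

lemma index_mult_mat_sum:
  assumes "A \<in> carrier_mat (N+1) (N+1)" "B \<in> carrier_mat (N+1) (N+1)" "i \<le> N" "j \<le> N"
  shows "(A * B) $$ (i,j) = (\<Sum>l\<le>N. A $$ (i,l) * B $$ (l,j))"
  using assms by (simp add: scalar_prod_def atLeast0LessThan lessThan_Suc_atMost)

definition eigen_eq :: "nat \<Rightarrow> real mat \<Rightarrow> real \<Rightarrow> (nat \<Rightarrow> real) \<Rightarrow> bool" where
  "eigen_eq N J \<mu> v \<longleftrightarrow> (\<forall>i\<le>N. (\<Sum>j\<le>N. J $$ (i,j) * v j) = \<mu> * v i)"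

lemma eigen_eq_lincomb:
  assumes u: "eigen_eq N J \<mu> u" and v: "eigen_eq N J \<mu> v"
  shows "eigen_eq N J \<mu> (\<lambda>i. a * u i + b * v i)"
  unfolding eigen_eq_def
proof (intro allI impI)
  fix i assume "i \<le> N"
  have "(\<Sum>j\<le>N. J $$ (i,j) * (a * u j + b * v j))
      = a * (\<Sum>j\<le>N. J $$ (i,j) * u j) + b * (\<Sum>j\<le>N. J $$ (i,j) * v j)"
    by (simp add: algebra_simps sum.distrib sum_distrib_left)
  also have "\<dots> = \<mu> * (a * u i + b * v i)"
    using u v \<open>i \<le> N\<close> by (simp add: eigen_eq_def algebra_simps)
  finally show "(\<Sum>j\<le>N. J $$ (i,j) * (a * u j + b * v j)) = \<mu> * (a * u i + b * v i)" .
qed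

lemma symmetric_eigen_eq_orthogonal:
  assumes sym: "\<And>i j. i \<le> N \<Longrightarrow> j \<le> N \<Longrightarrow> J $$ (i,j) = J $$ (j,i)"
    and u: "eigen_eq N J \<mu> u" and v: "eigen_eq N J \<nu> v" and "\<mu> \<noteq> \<nu>"
  shows "(\<Sum>i\<le>N. u i * v i) = 0"
proof -
  have "\<mu> * (\<Sum>i\<le>N. u i * v i) = (\<Sum>i\<le>N. (\<Sum>j\<le>N. J $$ (i,j) * u j) * v i)"
    using u by (simp add: eigen_eq_def sum_distrib_left mult.assoc)
  also have "\<dots> = (\<Sum>i\<le>N. \<Sum>j\<le>N. J $$ (i,j) * u j * v i)"
    by (simp add: sum_distrib_right)
  also have "\<dots> = (\<Sum>j\<le>N. \<Sum>i\<le>N. J $$ (i,j) * u j * v i)"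
    by (rule sum.swap)
  also have "\<dots> = (\<Sum>j\<le>N. u j * (\<Sum>i\<le>N. J $$ (j,i) * v i))"
    by (auto simp: sum_distrib_left sym mult_ac intro!: sum.cong)
  also have "\<dots> = \<nu> * (\<Sum>i\<le>N. u i * v i)"
    using v by (simp add: eigen_eq_def sum_distrib_left mult_ac)
  finally have "(\<mu> - \<nu>) * (\<Sum>i\<le>N. u i * v i) = 0" by (simp add: algebra_simps)
  then show ?thesis using \<open>\<mu> \<noteq> \<nu>\<close> by simp
qed

lemma orthonormal_columns_imp_rows:
  fixes a :: "nat \<Rightarrow> nat \<Rightarrow> real"
  assumes "\<And>k k'. k \<le> N \<Longrightarrow> k' \<le> N \<Longrightarrow> (\<Sum>i\<le>N. a k i * a k' i) = (if k = k' then 1 else 0)"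
    and "i \<le> N" "j \<le> N"
  shows "(\<Sum>k\<le>N. a k i * a k j) = (if i = j then 1 else 0)"
proof -
  define U where "U = mat (N+1) (N+1) (\<lambda>(i,k). a k i)"
  have U: "U \<in> carrier_mat (N+1) (N+1)" "transpose_mat U \<in> carrier_mat (N+1) (N+1)"
    unfolding U_def by auto
  have "transpose_mat U * U = 1\<^sub>m (N+1)"
    by (rule eq_matI)
      (auto simp: U_def scalar_prod_def atLeast0LessThan lessThan_Suc_atMost assms(1))
  then have "U * transpose_mat U = 1\<^sub>m (N+1)"
    by (rule mat_mult_left_right_inverse[OF U(2,1)])
  then have "(U * transpose_mat U) $$ (i,j) = (if i = j then 1 else 0)"
    using assms(2,3) by simp
  then show ?thesis
    using assms(2,3) by (simp add: U_def scalar_prod_def atLeast0LessThan lessThan_Suc_atMost)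
qed

lemma orthogonal_columns_completeness:
  fixes u :: "nat \<Rightarrow> nat \<Rightarrow> real"
  assumes orth: "\<And>k k'. k \<le> N \<Longrightarrow> k' \<le> N \<Longrightarrow> k \<noteq> k' \<Longrightarrow> (\<Sum>i\<le>N. u k i * u k' i) = 0"
    and norm: "\<And>k. k \<le> N \<Longrightarrow> w k * (\<Sum>i\<le>N. (u k i)\<^sup>2) = 1"
    and "i \<le> N" "j \<le> N"
  shows "(\<Sum>k\<le>N. w k * u k i * u k j) = (if i = j then 1 else 0)"
proof -
  have wpos: "w k > 0" if "k \<le> N" for k
  proof -
    have "(\<Sum>i\<le>N. (u k i)\<^sup>2) \<ge> 0" by (rule sum_nonneg) simp
    moreover have "(\<Sum>i\<le>N. (u k i)\<^sup>2) \<noteq> 0" using norm[OF that] by auto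
    ultimately have "(\<Sum>i\<le>N. (u k i)\<^sup>2) > 0" by simp
    moreover have "w k = 1 / (\<Sum>i\<le>N. (u k i)\<^sup>2)"
      using norm[OF that] \<open>(\<Sum>i\<le>N. (u k i)\<^sup>2) \<noteq> 0\<close> by (simp add: eq_divide_eq)
    ultimately show ?thesis by simp
  qed
  have "(\<Sum>i\<le>N. (sqrt (w k) * u k i) * (sqrt (w k') * u k' i)) = (if k = k' then 1 else 0)"
    if "k \<le> N" "k' \<le> N" for k k'
  proof -
    have eq: "(\<Sum>i\<le>N. (sqrt (w k) * u k i) * (sqrt (w k') * u k' i))
        = sqrt (w k) * sqrt (w k') * (\<Sum>i\<le>N. u k i * u k' i)"
      by (simp add: sum_distrib_left mult_ac)
    show ?thesis
    proof (cases "k = k'")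
      case True
      have "sqrt (w k) * sqrt (w k) * (\<Sum>i\<le>N. u k i * u k i) = 1"
        using wpos[OF that(1)] norm[OF that(1)] by (simp add: power2_eq_square)
      then show ?thesis using eq True by simp
    next
      case False
      then show ?thesis using eq orth that by simp
    qed
  qed
  then have "(\<Sum>k\<le>N. (sqrt (w k) * u k i) * (sqrt (w k) * u k j)) = (if i = j then 1 else 0)"
    by (rule orthonormal_columns_imp_rows[OF _ \<open>i \<le> N\<close> \<open>j \<le> N\<close>])
  moreover have "(sqrt (w k) * u k i) * (sqrt (w k) * u k j) = w k * u k i * u k j"
    if "k \<le> N" for k
    using wpos[OF that] by (simp add: mult_ac real_sqrt_mult_self)
  ultimately show ?thesis by simp
qed

lemma pow_eq_spectral_sum:
  assumes C: "J \<in> carrier_mat (N+1) (N+1)"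
    and sym: "\<And>i j. i \<le> N \<Longrightarrow> j \<le> N \<Longrightarrow> J $$ (i,j) = J $$ (j,i)"
    and eig: "\<And>k. k \<le> N \<Longrightarrow> eigen_eq N J (lam k) (u k)"
    and compl: "\<And>i j. i \<le> N \<Longrightarrow> j \<le> N \<Longrightarrow>
      (\<Sum>k\<le>N. w k * u k i * u k j) = (if i = j then 1 else 0)"
    and "i \<le> N" "j \<le> N"
  shows "(J ^\<^sub>m m) $$ (i,j) = (\<Sum>k\<le>N. lam k ^ m * w k * u k i * u k j)"
  using \<open>j \<le> N\<close>
proof (induction m arbitrary: j)
  case 0
  then show ?case using C compl \<open>i \<le> N\<close> by simp
next
  case (Suc m)
  have "(J ^\<^sub>m Suc m) $$ (i,j) = (\<Sum>l\<le>N. (J ^\<^sub>m m) $$ (i,l) * J $$ (j,l))"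
    using Suc.prems \<open>i \<le> N\<close>
    by (simp add: index_mult_mat_sum[OF pow_carrier_mat[OF C] C] sym)
  also have "\<dots> = (\<Sum>l\<le>N. \<Sum>k\<le>N. lam k ^ m * w k * u k i * (J $$ (j,l) * u k l))"
    using Suc.IH by (simp add: sum_distrib_left sum_distrib_right mult_ac)
  also have "\<dots> = (\<Sum>k\<le>N. lam k ^ m * w k * u k i * (\<Sum>l\<le>N. J $$ (j,l) * u k l))"
    by (subst sum.swap) (simp add: sum_distrib_left)
  also have "\<dots> = (\<Sum>k\<le>N. lam k ^ Suc m * w k * u k i * u k j)"
    using eig Suc.prems by (auto simp: eigen_eq_def intro!: sum.cong)
  finally show ?case .
qed

section \<open>Jacobi matrices\<close>

lemma jacobi_matrix_carrier: "jacobi_matrix N J \<Longrightarrow> J \<in> carrier_mat (N+1) (N+1)"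
  by (simp add: jacobi_matrix_def)

lemma jacobi_matrix_sym:
  "jacobi_matrix N J \<Longrightarrow> i \<le> N \<Longrightarrow> j \<le> N \<Longrightarrow> J $$ (i,j) = J $$ (j,i)"
  by (simp add: jacobi_matrix_def)

lemma jacobi_matrix_zero:
  "jacobi_matrix N J \<Longrightarrow> i \<le> N \<Longrightarrow> j \<le> N \<Longrightarrow> j \<noteq> i \<Longrightarrow> j \<noteq> Suc i \<Longrightarrow> i \<noteq> Suc j
    \<Longrightarrow> J $$ (i,j) = 0"
  by (simp add: jacobi_matrix_def)

lemma jacobi_matrix_superdiag_pos: "jacobi_matrix N J \<Longrightarrow> l < N \<Longrightarrow> J $$ (l, Suc l) > 0"
  by (simp add: jacobi_matrix_def)

lemma jacobi_row_sum:
  assumes "jacobi_matrix N J" "i < N"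
  shows "(\<Sum>j\<le>N. J $$ (i,j) * v j) = (\<Sum>j\<le>i. J $$ (i,j) * v j) + J $$ (i, Suc i) * v (Suc i)"
proof -
  have "(\<Sum>j\<le>N. J $$ (i,j) * v j) = (\<Sum>j\<le>Suc i. J $$ (i,j) * v j)"
    by (rule sum.mono_neutral_right) (use assms in \<open>auto intro: jacobi_matrix_zero\<close>)
  then show ?thesis by simp
qed

lemma jacobi_eigen_eq_first_zero:
  assumes J: "jacobi_matrix N J" and v: "eigen_eq N J \<mu> v" and "v 0 = 0" and "i \<le> N"
  shows "v i = 0"
proof -
  have "\<forall>i'\<le>i. v i' = 0" if "i \<le> N" for i
    using that
  proof (induction i)
    case 0
    then show ?case using \<open>v 0 = 0\<close> by simp
  next
    case (Suc i)
    then have IH: "\<forall>i'\<le>i. v i' = 0" by simp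
    have "J $$ (i, Suc i) * v (Suc i) = \<mu> * v i"
      using v Suc.prems jacobi_row_sum[OF J, of i v] IH by (simp add: eigen_eq_def)
    then have "v (Suc i) = 0"
      using IH jacobi_matrix_superdiag_pos[OF J, of i] Suc.prems by simp
    then show ?case using IH le_Suc_eq by auto
  qed
  then show ?thesis using assms by blast
qed

lemma jacobi_pow_below_band:
  assumes J: "jacobi_matrix N J" and "i \<le> N" "j \<le> N" "j + m < i"
  shows "(J ^\<^sub>m m) $$ (i,j) = 0"
  using assms(2-)
proof (induction m arbitrary: i j)
  case 0
  then show ?case using jacobi_matrix_carrier[OF J] by simp
next
  case (Suc m)
  have C: "J \<in> carrier_mat (N+1) (N+1)" by (rule jacobi_matrix_carrier[OF J])
  have "(J ^\<^sub>m Suc m) $$ (i,j) = (\<Sum>l\<le>N. (J ^\<^sub>m m) $$ (i,l) * J $$ (l,j))"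
    using Suc.prems by (simp add: index_mult_mat_sum[OF pow_carrier_mat[OF C] C])
  also have "\<dots> = 0"
  proof (rule sum.neutral, rule ballI)
    fix l assume l: "l \<in> {..N}"
    show "(J ^\<^sub>m m) $$ (i,l) * J $$ (l,j) = 0"
    proof (cases "l \<le> Suc j")
      case True
      then show ?thesis using Suc l by simp
    next
      case False
      then show ?thesis using jacobi_matrix_zero[OF J, of l j] l Suc.prems by simp
    qed
  qed
  finally show ?case .
qed

lemma jacobi_eigenvalue_imp_eigen_eq:
  assumes J: "jacobi_matrix N J" and "eigenvalue J \<mu>"
  obtains v where "eigen_eq N J \<mu> v" "v 0 = 1"
proof -
  have C: "J \<in> carrier_mat (N+1) (N+1)" by (rule jacobi_matrix_carrier[OF J])
  obtain x where x: "x \<in> carrier_vec (N+1)" "x \<noteq> 0\<^sub>v (N+1)" "J *\<^sub>v x = \<mu> \<cdot>\<^sub>v x"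
    using assms(2) C unfolding eigenvalue_def eigenvector_def by auto
  have ex: "eigen_eq N J \<mu> (\<lambda>i. x $ i)"
    unfolding eigen_eq_def
  proof (intro allI impI)
    fix i assume "i \<le> N"
    then have "(J *\<^sub>v x) $ i = (\<Sum>j\<le>N. J $$ (i,j) * x $ j)"
      using C x(1) by (simp add: scalar_prod_def atLeast0LessThan lessThan_Suc_atMost)
    then show "(\<Sum>j\<le>N. J $$ (i,j) * x $ j) = \<mu> * x $ i"
      using x(1,3) \<open>i \<le> N\<close> by simp
  qed
  have "x $ 0 \<noteq> 0"
  proof
    assume "x $ 0 = 0"
    then have "x = 0\<^sub>v (N+1)"
      using x(1) jacobi_eigen_eq_first_zero[OF J ex] by (intro eq_vecI) auto
    with x(2) show False ..
  qed
  have "eigen_eq N J \<mu> (\<lambda>i. x $ i / x $ 0)"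
    using eigen_eq_lincomb[OF ex ex, of "1 / x $ 0" 0] by simp
  then show thesis by (rule that) (use \<open>x $ 0 \<noteq> 0\<close> in simp)
qed

text \<open>\<open>u k\<close> is the eigenvector for \<open>lam k\<close> normalised by \<open>u k 0 = 1\<close> (the orthogonal
  polynomials evaluated at \<open>lam k\<close>), \<open>w k\<close> the mass at \<open>lam k\<close> of the spectral measure of \<open>e\<^sub>0\<close>.\<close>
definition spectral_data ::
    "nat \<Rightarrow> real mat \<Rightarrow> (nat \<Rightarrow> real) \<Rightarrow> (nat \<Rightarrow> nat \<Rightarrow> real) \<Rightarrow> (nat \<Rightarrow> real) \<Rightarrow> bool" where
  "spectral_data N J lam u w \<longleftrightarrow>
     (\<forall>k\<le>N. u k 0 = 1 \<and> w k > 0 \<and> eigen_eq N J (lam k) (u k)) \<and>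
     (\<forall>m i j. i \<le> N \<longrightarrow> j \<le> N \<longrightarrow>
        (J ^\<^sub>m m) $$ (i,j) = (\<Sum>k\<le>N. lam k ^ m * w k * u k i * u k j))"

lemma jacobi_spectral_data_exists:
  assumes J: "jacobi_matrix N J"
    and ev: "\<And>k. k \<le> N \<Longrightarrow> eigenvalue J (lam k)" and inj: "inj_on lam {..N}"
  obtains u w where "spectral_data N J lam u w"
proof -
  have "\<forall>k. \<exists>v. k \<le> N \<longrightarrow> eigen_eq N J (lam k) v \<and> v 0 = 1"
    using jacobi_eigenvalue_imp_eigen_eq[OF J ev] by metis
  then obtain u where u: "\<And>k. k \<le> N \<Longrightarrow> eigen_eq N J (lam k) (u k) \<and> u k 0 = 1"
    by metis
  define w where "w k = 1 / (\<Sum>i\<le>N. (u k i)\<^sup>2)" for k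
  have norm_pos: "(\<Sum>i\<le>N. (u k i)\<^sup>2) > 0" if "k \<le> N" for k
  proof -
    have "(u k 0)\<^sup>2 \<le> (\<Sum>i\<le>N. (u k i)\<^sup>2)" by (rule member_le_sum) auto
    then show ?thesis using u[OF that] by simp
  qed
  have orth: "(\<Sum>i\<le>N. u k i * u k' i) = 0" if "k \<le> N" "k' \<le> N" "k \<noteq> k'" for k k'
  proof -
    have "lam k \<noteq> lam k'" using inj that by (auto dest: inj_onD)
    then show ?thesis
      using u that by (intro symmetric_eigen_eq_orthogonal[OF jacobi_matrix_sym[OF J]]) auto
  qed
  have "w k * (\<Sum>i\<le>N. (u k i)\<^sup>2) = 1" if "k \<le> N" for k
    using norm_pos[OF that] by (simp add: w_def)
  note compl = orthogonal_columns_completeness[OF orth this]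
  show thesis
    using u norm_pos pow_eq_spectral_sum[OF jacobi_matrix_carrier[OF J] jacobi_matrix_sym[OF J] _ compl]
    by (intro that[of u w]) (simp add: spectral_data_def w_def)
qed

section \<open>Arithmetic progressions\<close>

lemma const_diff_imp_arith_prog:
  fixes f :: "nat \<Rightarrow> real"
  assumes "\<forall>i<N. f (Suc i) - f i = d" and "k \<le> N"
  shows "f k = f 0 + real k * d"
  using assms(2)
proof (induction k)
  case (Suc k)
  then show ?case using assms(1) by (simp add: algebra_simps)
qed simp

lemma arith_prog_inj_on:
  fixes lam :: "nat \<Rightarrow> real"
  assumes lam: "\<And>k. k \<le> N \<Longrightarrow> lam k = lam 0 + real k * d" and "d \<noteq> 0"
  shows "inj_on lam {..N}"
proof (rule inj_onI)
  fix k k' assume "k \<in> {..N}" "k' \<in> {..N}" "lam k = lam k'"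
  then have "real k * d = real k' * d" using lam[of k] lam[of k'] by simp
  then show "k = k'" using \<open>d \<noteq> 0\<close> by simp
qed

lemma prod_abs_diff_of_nat:
  assumes "k \<le> N"
  shows "(\<Prod>j\<in>{..N}-{k}. \<bar>real k - real j\<bar>) = fact k * fact (N-k)"
  using assms
proof (induction N rule: dec_induct)
  case base
  have "(\<Prod>j\<in>{..k}-{k}. \<bar>real k - real j\<bar>) = (\<Prod>j\<in>{0..<k}. real (k - j))"
    by (rule prod.cong) (auto simp: of_nat_diff)
  also have "\<dots> = fact k" by (simp add: fact_prod_rev[of k] of_nat_prod)
  finally show ?case by simp
next
  case (step n)
  have "{..Suc n}-{k} = insert (Suc n) ({..n}-{k})" using step by auto
  then have "(\<Prod>j\<in>{..Suc n}-{k}. \<bar>real k - real j\<bar>)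
      = \<bar>real k - real (Suc n)\<bar> * (\<Prod>j\<in>{..n}-{k}. \<bar>real k - real j\<bar>)"
    by simp
  also have "\<dots> = real (Suc (n - k)) * (fact k * fact (n-k))"
    using step by (simp add: of_nat_diff)
  also have "\<dots> = fact k * fact (Suc n - k)"
    using step by (simp add: Suc_diff_le)
  finally show ?case .
qed

lemma arith_prog_prod_abs_diff:
  fixes lam :: "nat \<Rightarrow> real"
  assumes lam: "\<And>k. k \<le> N \<Longrightarrow> lam k = lam 0 + real k * d" and "k \<le> N"
  shows "(\<Prod>j\<in>{..N}-{k}. \<bar>lam k - lam j\<bar>) = \<bar>d\<bar> ^ N * (fact k * fact (N-k))"
proof -
  have "\<bar>lam k - lam j\<bar> = \<bar>d\<bar> * \<bar>real k - real j\<bar>" if "j \<le> N" for j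
  proof -
    have "lam k - lam j = d * (real k - real j)"
      using lam[OF \<open>k \<le> N\<close>] lam[OF that] by (simp add: algebra_simps)
    then show ?thesis by (simp add: abs_mult)
  qed
  then have "(\<Prod>j\<in>{..N}-{k}. \<bar>lam k - lam j\<bar>) = (\<Prod>j\<in>{..N}-{k}. \<bar>d\<bar> * \<bar>real k - real j\<bar>)"
    by (intro prod.cong) auto
  also have "\<dots> = \<bar>d\<bar> ^ N * (fact k * fact (N-k))"
    using prod_abs_diff_of_nat[OF \<open>k \<le> N\<close>] \<open>k \<le> N\<close> by (simp add: prod.distrib)
  finally show ?thesis .
qed

section \<open>Moments and Lagrange interpolation\<close>

lemma vanishing_moments_poly:
  fixes x s :: "nat \<Rightarrow> real"
  assumes mom: "\<And>m. m < N \<Longrightarrow> (\<Sum>i\<le>N. x i ^ m * s i) = 0" and "degree p \<le> N"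
  shows "(\<Sum>i\<le>N. s i * poly p (x i)) = coeff p N * (\<Sum>i\<le>N. x i ^ N * s i)"
proof -
  have "poly p y = (\<Sum>m\<le>N. coeff p m * y ^ m)" for y
  proof -
    have "poly p y = poly (\<Sum>m\<le>N. monom (coeff p m) m) y"
      by (simp only: poly_as_sum_of_monoms'[OF \<open>degree p \<le> N\<close>])
    then show ?thesis by (simp add: poly_sum poly_monom)
  qed
  then have "(\<Sum>i\<le>N. s i * poly p (x i)) = (\<Sum>i\<le>N. \<Sum>m\<le>N. coeff p m * (x i ^ m * s i))"
    by (simp add: sum_distrib_left mult_ac)
  also have "\<dots> = (\<Sum>m\<le>N. coeff p m * (\<Sum>i\<le>N. x i ^ m * s i))"
    by (subst sum.swap) (simp add: sum_distrib_left)
  also have "\<dots> = coeff p N * (\<Sum>i\<le>N. x i ^ N * s i)"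
  proof -
    have "{..N} = insert N {..<N}" by auto
    then show ?thesis using mom by simp
  qed
  finally show ?thesis .
qed

text \<open>Pairing the moments with the monic Lagrange polynomial \<open>\<Prod>j\<noteq>k. (X - x j)\<close> of degree
  \<open>N\<close> picks out \<open>s k\<close> on one side and the top moment on the other.\<close>
lemma vanishing_moments_lagrange:
  fixes x s :: "nat \<Rightarrow> real"
  assumes mom: "\<And>m. m < N \<Longrightarrow> (\<Sum>i\<le>N. x i ^ m * s i) = 0" and "k \<le> N"
  shows "s k * (\<Prod>j\<in>{..N}-{k}. x k - x j) = (\<Sum>i\<le>N. x i ^ N * s i)"
proof -
  define L where "L = (\<Prod>j\<in>{..N}-{k}. [:- x j, 1:])"
  have "monic L" unfolding L_def by (rule monic_prod) simp
  moreover have "degree L = N"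
    using degree_prod_eq_sum_degree[of "{..N}-{k}" "\<lambda>j. [:- x j, 1:]"] \<open>k \<le> N\<close>
    by (simp add: L_def)
  ultimately have "(\<Sum>i\<le>N. s i * poly L (x i)) = (\<Sum>i\<le>N. x i ^ N * s i)"
    using vanishing_moments_poly[OF mom] by simp
  moreover have "(\<Sum>i\<le>N. s i * poly L (x i)) = s k * poly L (x k)"
    using \<open>k \<le> N\<close> by (intro sum.mono_neutral_right[of "{..N}" "{k}", simplified])
      (auto simp: L_def poly_prod)
  ultimately show ?thesis by (simp add: L_def poly_prod)
qed

section \<open>Persymmetry and binomial weights\<close>

lemma persymmetric_entry_reflect:
  assumes J: "jacobi_matrix N J" and P: "persymmetric N J" and "i \<le> N" "j \<le> N"
  shows "J $$ (N-i, N-j) = J $$ (i,j)"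
proof -
  have diag: "J $$ (k,k) = J $$ (N-k, N-k)" if "k \<le> N" for k
    using P that unfolding persymmetric_def by blast
  have super: "J $$ (N-l, N-1-l) = J $$ (l, Suc l)" if "l < N" for l
  proof -
    have "J $$ (l, Suc l) = J $$ (N-1-l, N-l)"
      using P that unfolding persymmetric_def by blast
    then show ?thesis using that jacobi_matrix_sym[OF J, of "N-1-l" "N-l"] by simp
  qed
  consider "j = i" | "j = Suc i" | "i = Suc j" | "j \<noteq> i" "j \<noteq> Suc i" "i \<noteq> Suc j"
    by blast
  then show ?thesis
  proof cases
    case 1
    then show ?thesis using diag[of i] \<open>i \<le> N\<close> by simp
  next
    case 2
    then show ?thesis using super[of i] assms(4) by simp
  next
    case 3
    then show ?thesis
      using super[of j] assms(3) jacobi_matrix_sym[OF J, of i j] jacobi_matrix_sym[OF J, of "N-i" "N-j"]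
      by simp
  next
    case 4
    then have "N-j \<noteq> N-i \<and> N-j \<noteq> Suc (N-i) \<and> N-i \<noteq> Suc (N-j)"
      using assms(3,4) by presburger
    then show ?thesis using 4 assms(3,4) jacobi_matrix_zero[OF J] by simp
  qed
qed

lemma persymmetric_eigen_eq_reflect:
  assumes J: "jacobi_matrix N J" and P: "persymmetric N J" and u: "eigen_eq N J \<mu> u"
  shows "eigen_eq N J \<mu> (\<lambda>i. u (N-i))"
  unfolding eigen_eq_def
proof (intro allI impI)
  fix i assume "i \<le> N"
  have "(\<Sum>j\<le>N. J $$ (i,j) * u (N-j)) = (\<Sum>j\<le>N. J $$ (N-i, N-j) * u (N-j))"
    using persymmetric_entry_reflect[OF J P] \<open>i \<le> N\<close> by (auto intro!: sum.cong)
  also have "\<dots> = (\<Sum>j\<le>N. J $$ (N-i, j) * u j)"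
    using sum.atLeastAtMost_rev[of "\<lambda>j. J $$ (N-i, j) * u j" 0 N] by (simp add: atMost_atLeast0)
  also have "\<dots> = \<mu> * u (N-i)"
    using u by (simp add: eigen_eq_def)
  finally show "(\<Sum>j\<le>N. J $$ (i,j) * u (N-j)) = \<mu> * u (N-i)" .
qed

lemma persymmetric_normalized_eigen_eq_reflect:
  assumes J: "jacobi_matrix N J" and P: "persymmetric N J"
    and u: "eigen_eq N J \<mu> u" and "u 0 = 1" and "i \<le> N"
  shows "u (N-i) = u N * u i"
proof -
  have "eigen_eq N J \<mu> (\<lambda>i. 1 * u (N-i) + (- u N) * u i)"
    by (rule eigen_eq_lincomb[OF persymmetric_eigen_eq_reflect[OF J P u] u])
  from jacobi_eigen_eq_first_zero[OF J this _ \<open>i \<le> N\<close>] show ?thesis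
    using \<open>u 0 = 1\<close> by simp
qed

lemma persymmetric_normalized_eigen_eq_last_abs:
  assumes "jacobi_matrix N J" "persymmetric N J" "eigen_eq N J \<mu> u" "u 0 = 1"
  shows "\<bar>u N\<bar> = 1"
proof -
  have "(u N)\<^sup>2 = 1"
    using persymmetric_normalized_eigen_eq_reflect[OF assms, of N] \<open>u 0 = 1\<close>
    by (simp add: power2_eq_square)
  then show ?thesis by (auto simp: power2_eq_1_iff)
qed

lemma spectral_data_last_moments_vanish:
  assumes J: "jacobi_matrix N J" and S: "spectral_data N J lam u w" and "m < N"
  shows "(\<Sum>k\<le>N. lam k ^ m * (w k * u k N)) = 0"
proof -
  have "(J ^\<^sub>m m) $$ (N,0) = 0"
    using \<open>m < N\<close> by (intro jacobi_pow_below_band[OF J]) auto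
  then show ?thesis using S by (simp add: spectral_data_def mult_ac)
qed

lemma persymmetric_weight_eq:
  assumes J: "jacobi_matrix N J" and P: "persymmetric N J" and S: "spectral_data N J lam u w"
    and "k \<le> N"
  shows "w k * (\<Prod>j\<in>{..N}-{k}. \<bar>lam k - lam j\<bar>) = \<bar>\<Sum>i\<le>N. lam i ^ N * (w i * u i N)\<bar>"
proof -
  have "w k > 0" "\<bar>u k N\<bar> = 1"
    using S \<open>k \<le> N\<close> persymmetric_normalized_eigen_eq_last_abs[OF J P]
    by (auto simp: spectral_data_def)
  then have "\<bar>w k * u k N\<bar> = w k" by (simp add: abs_mult)
  moreover have "(w k * u k N) * (\<Prod>j\<in>{..N}-{k}. lam k - lam j) = (\<Sum>i\<le>N. lam i ^ N * (w i * u i N))"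
    by (rule vanishing_moments_lagrange[OF spectral_data_last_moments_vanish[OF J S] \<open>k \<le> N\<close>])
  ultimately show ?thesis by (metis abs_mult abs_prod)
qed

lemma persymmetric_equally_spaced_weights_binomial:
  assumes J: "jacobi_matrix N J" and P: "persymmetric N J" and S: "spectral_data N J lam u w"
    and "d \<noteq> 0" and lam: "\<And>k. k \<le> N \<Longrightarrow> lam k = lam 0 + real k * d"
  obtains c where "c > 0" "\<And>k. k \<le> N \<Longrightarrow> w k = c * real (N choose k)"
proof -
  define B where "B = \<bar>\<Sum>i\<le>N. lam i ^ N * (w i * u i N)\<bar>"
  have wB: "w k * (\<bar>d\<bar> ^ N * (fact k * fact (N-k))) = B" if "k \<le> N" for k
    using persymmetric_weight_eq[OF J P S that] arith_prog_prod_abs_diff[OF lam that]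
    by (simp add: B_def)
  define c where "c = B / (\<bar>d\<bar> ^ N * fact N)"
  have "w 0 > 0" using S by (simp add: spectral_data_def)
  then have "w 0 * (\<bar>d\<bar> ^ N * fact N) > 0" using \<open>d \<noteq> 0\<close> by simp
  then have "B > 0" using wB[of 0] by simp
  then have "c > 0" using \<open>d \<noteq> 0\<close> by (simp add: c_def)
  moreover have "w k = c * real (N choose k)" if "k \<le> N" for k
  proof -
    have "w k = B / (\<bar>d\<bar> ^ N * (fact k * fact (N-k)))"
      using wB[OF that] \<open>d \<noteq> 0\<close> by (simp add: eq_divide_eq)
    also have "\<dots> = c * (fact N / (fact k * fact (N-k)))"
      by (simp add: c_def)
    also have "\<dots> = c * real (N choose k)"
      using binomial_fact[OF that, where ?'a = real] by simp
    finally show ?thesis .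
  qed
  ultimately show thesis by (rule that)
qed

section \<open>The evolution\<close>

lemma scalar_prod_conj_unit_vec:
  assumes "i < n"
  shows "(v :: complex vec) \<bullet>c unit_vec n i = v $ i"
proof -
  have "conjugate (unit_vec n i) = (unit_vec n i :: complex vec)"
    by (rule eq_vecI) (auto simp: unit_vec_def)
  then show ?thesis using assms by simp
qed

lemma exp_sums_divide_fact:
  fixes y :: "'a :: {real_normed_field, banach}"
  shows "(\<lambda>n. y ^ n / fact n) sums exp y"
  using exp_converges[of y] by (simp add: scaleR_conv_of_real divide_inverse mult.commute)

lemma evol_nth_spectral:
  assumes J: "jacobi_matrix N J" and S: "spectral_data N J lam u w" and "j \<le> N"
  shows "evol N J t $ j = (\<Sum>k\<le>N. of_real (w k * u k j) * cis (- (t * lam k)))"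
proof -
  have C: "J \<in> carrier_mat (N+1) (N+1)" by (rule jacobi_matrix_carrier[OF J])
  define x where "x = - (\<i> * complex_of_real t)"
  have series_eq: "x ^ m / fact m * (map_mat complex_of_real J ^\<^sub>m m) $$ (j, 0)
      = (\<Sum>k\<le>N. of_real (w k * u k j) * ((x * of_real (lam k)) ^ m / fact m))" for m
  proof -
    have "(map_mat complex_of_real J ^\<^sub>m m) $$ (j, 0) = of_real ((J ^\<^sub>m m) $$ (j, 0))"
      unfolding of_real_hom.mat_hom_pow[OF C, symmetric]
      using \<open>j \<le> N\<close> pow_carrier_mat[OF C, of m] by (subst index_map_mat) auto
    also have "\<dots> = (\<Sum>k\<le>N. of_real (lam k ^ m * w k * u k j))"
      using S \<open>j \<le> N\<close> by (simp add: spectral_data_def)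
    finally show ?thesis by (simp add: sum_distrib_left power_mult_distrib mult_ac)
  qed
  have "(\<lambda>m. x ^ m / fact m * (map_mat complex_of_real J ^\<^sub>m m) $$ (j, 0))
      sums (\<Sum>k\<le>N. of_real (w k * u k j) * exp (x * of_real (lam k)))"
    unfolding series_eq by (intro sums_sum sums_mult exp_sums_divide_fact)
  moreover have "evol N J t $ j = (\<Sum>m. x ^ m / fact m * (map_mat complex_of_real J ^\<^sub>m m) $$ (j, 0))"
    using \<open>j \<le> N\<close> by (simp add: evol_def x_def)
  moreover have "exp (x * of_real (lam k)) = cis (- (t * lam k))" for k
    by (simp add: x_def cis_conv_exp mult.assoc)
  ultimately show ?thesis by (simp add: sums_iff)
qed

lemma evol_nth_equally_spaced:
  assumes J: "jacobi_matrix N J" and S: "spectral_data N J lam u w"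
    and lam: "\<And>k. k \<le> N \<Longrightarrow> lam k = lam 0 + real k * d" and "j \<le> N"
  shows "evol N J t $ j
    = cis (- (t * lam 0)) * (\<Sum>k\<le>N. of_real (w k * u k j) * cis (- (t * d)) ^ k)"
proof -
  have phase: "cis (- (t * lam k)) = cis (- (t * lam 0)) * cis (- (t * d)) ^ k" if "k \<le> N" for k
  proof -
    have "- (t * lam k) = - (t * lam 0) + real k * - (t * d)"
      using lam[OF that] by (simp add: algebra_simps)
    then show ?thesis by (simp only: DeMoivre cis_mult)
  qed
  have "evol N J t $ j = (\<Sum>k\<le>N. cis (- (t * lam 0)) * (of_real (w k * u k j) * cis (- (t * d)) ^ k))"
    unfolding evol_nth_spectral[OF J S \<open>j \<le> N\<close>]
  proof (rule sum.cong)
    fix k assume "k \<in> {..N}"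
    then show "of_real (w k * u k j) * cis (- (t * lam k))
        = cis (- (t * lam 0)) * (of_real (w k * u k j) * cis (- (t * d)) ^ k)"
      using phase[of k] by simp
  qed simp
  then show ?thesis by (simp only: sum_distrib_left)
qed

lemma evol_eq_smult_if_same_phase:
  assumes J: "jacobi_matrix N J" and S: "spectral_data N J lam u w"
    and lam: "\<And>k. k \<le> N \<Longrightarrow> lam k = lam 0 + real k * d"
    and "cis (- (s * d)) = cis (- (s' * d))"
  shows "evol N J s = cis ((s' - s) * lam 0) \<cdot>\<^sub>v evol N J s'"
proof -
  have dim: "dim_vec (evol N J r) = N+1" for r by (simp add: evol_def)
  have "cis ((s' - s) * lam 0) * cis (- (s' * lam 0)) = cis (- (s * lam 0))"
    by (simp add: cis_mult algebra_simps)
  then show ?thesis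
    using assms(4) by (intro eq_vecI) (auto simp: dim evol_nth_equally_spaced[OF J S lam])
qed

lemma evol_first_entry_binomial:
  assumes J: "jacobi_matrix N J" and S: "spectral_data N J lam u w"
    and lam: "\<And>k. k \<le> N \<Longrightarrow> lam k = lam 0 + real k * d"
    and w: "\<And>k. k \<le> N \<Longrightarrow> w k = c * real (N choose k)"
  shows "evol N J t $ 0 = of_real c * cis (- (t * lam 0)) * (cis (- (t * d)) + 1) ^ N"
proof -
  have "(\<Sum>k\<le>N. of_real (w k * u k 0) * z ^ k) = of_real c * (z + 1) ^ N" for z :: complex
  proof -
    have "(\<Sum>k\<le>N. of_real (w k * u k 0) * z ^ k)
        = (\<Sum>k\<le>N. of_real c * (of_nat (N choose k) * z ^ k * 1 ^ (N - k)))"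
      using S w by (auto simp: spectral_data_def intro!: sum.cong)
    also have "\<dots> = of_real c * (z + 1) ^ N"
      by (simp add: binomial_ring sum_distrib_left)
    finally show ?thesis .
  qed
  then show ?thesis
    using evol_nth_equally_spaced[OF J S lam, of 0] by simp
qed

lemma evol_first_entry_eq_0_iff:
  assumes J: "jacobi_matrix N J" and S: "spectral_data N J lam u w"
    and lam: "\<And>k. k \<le> N \<Longrightarrow> lam k = lam 0 + real k * d"
    and w: "\<And>k. k \<le> N \<Longrightarrow> w k = c * real (N choose k)" and "c > 0" and "N \<ge> 1"
  shows "evol N J t $ 0 = 0 \<longleftrightarrow> cis (- (t * d)) = -1"
proof -
  have "evol N J t $ 0 = 0 \<longleftrightarrow> (cis (- (t * d)) + 1) ^ N = 0"
    using evol_first_entry_binomial[OF J S lam w] \<open>c > 0\<close> by simp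
  also have "\<dots> \<longleftrightarrow> cis (- (t * d)) + 1 = 0"
    using \<open>N \<ge> 1\<close> by simp
  also have "\<dots> \<longleftrightarrow> cis (- (t * d)) = -1"
    by (rule eq_neg_iff_add_eq_0[symmetric])
  finally show ?thesis .
qed

lemma PST_at_pi_div_spacing:
  assumes J: "jacobi_matrix N J" and S: "spectral_data N J lam u w"
    and lam: "\<And>k. k \<le> N \<Longrightarrow> lam k = lam 0 + real k * d" and "d > 0"
    and w: "\<And>k. k \<le> N \<Longrightarrow> w k = c * real (N choose k)" and "c > 0" and "N \<ge> 1"
    and "PST_at N J T"
  shows "PST_at N J (pi / d)"
proof -
  obtain \<phi> where T: "evol N J T = cis \<phi> \<cdot>\<^sub>v unit_vec (N+1) N"
    using \<open>PST_at N J T\<close> by (auto simp: PST_at_def cis_conv_exp)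
  then have "evol N J T $ 0 = 0" using \<open>N \<ge> 1\<close> by simp
  moreover have "cis (- pi) = -1" by (simp add: complex_eq_iff)
  ultimately have same_phase: "cis (- (pi / d * d)) = cis (- (T * d))"
    using evol_first_entry_eq_0_iff[OF J S lam w \<open>c > 0\<close> \<open>N \<ge> 1\<close>] \<open>d > 0\<close> by simp
  have "evol N J (pi / d) = cis ((T - pi / d) * lam 0) \<cdot>\<^sub>v evol N J T"
    by (rule evol_eq_smult_if_same_phase[OF J S lam same_phase])
  also have "\<dots> = cis ((T - pi / d) * lam 0 + \<phi>) \<cdot>\<^sub>v unit_vec (N+1) N"
    by (simp add: T smult_smult_assoc cis_mult)
  finally have "evol N J (pi / d)
      = exp (\<i> * of_real ((T - pi / d) * lam 0 + \<phi>)) \<cdot>\<^sub>v unit_vec (N+1) N"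
    by (simp only: cis_conv_exp)
  moreover have "pi / d > 0" using \<open>d > 0\<close> by simp
  ultimately show ?thesis unfolding PST_at_def by blast
qed

theorem mainTheorem3:
  fixes N :: nat and J :: "real mat" and lam :: "nat \<Rightarrow> real"
  assumes "N \<ge> 1"
    and "jacobi_matrix N J"
    and "persymmetric N J"
    and "\<exists>T. PST_at N J T"
    and "\<forall>i<N. lam i < lam (Suc i)"
    and "{x. eigenvalue J x} = lam ` {0..N}"
    and "\<forall>i<N. lam (Suc i) - lam i = lam 1 - lam 0"
  shows "\<not> (\<exists>t. ESE_at N J t)"
proof
  assume "\<exists>t. ESE_at N J t"
  then obtain t T0 where "0 < t" "t < T0" and T0: "earliest_PST N J T0"
    and "evol N J t \<bullet>c unit_vec (N+1) 0 = 0"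
    unfolding ESE_at_def by blast
  then have zero: "evol N J t $ 0 = 0" by (simp add: scalar_prod_conj_unit_vec)
  define d where "d = lam 1 - lam 0"
  have "d > 0" using assms(1,5) by (simp add: d_def)
  have lam: "lam k = lam 0 + real k * d" if "k \<le> N" for k
    using const_diff_imp_arith_prog[OF assms(7)[folded d_def] that] .
  have "inj_on lam {..N}" using arith_prog_inj_on[OF lam] \<open>d > 0\<close> by simp
  moreover have "eigenvalue J (lam k)" if "k \<le> N" for k using assms(6) that by auto
  ultimately obtain u w where S: "spectral_data N J lam u w"
    using jacobi_spectral_data_exists[OF assms(2)] by blast
  obtain c where "c > 0" and w: "\<And>k. k \<le> N \<Longrightarrow> w k = c * real (N choose k)"
    using persymmetric_equally_spaced_weights_binomial[OF assms(2,3) S _ lam] \<open>d > 0\<close> by auto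
  have "PST_at N J (pi / d)"
    using PST_at_pi_div_spacing[OF assms(2) S lam \<open>d > 0\<close> w \<open>c > 0\<close> assms(1)] assms(4) by blast
  then have "t < pi / d" using T0 \<open>t < T0\<close> by (auto simp: earliest_PST_def)
  then have "t * d < pi" using \<open>d > 0\<close> by (simp add: less_divide_eq)
  moreover have "cis (- (t * d)) = -1"
    using evol_first_entry_eq_0_iff[OF assms(2) S lam w \<open>c > 0\<close> assms(1)] zero by simp
  then have "sin (t * d) = 0" by (simp add: complex_eq_iff)
  ultimately show False using sin_gt_zero[of "t * d"] \<open>0 < t\<close> \<open>d > 0\<close> by simp
qed

end
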